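(* For every two-point selection $f$ on $\mathbb{R}$ there is a two-point selection $g$ on $\mathbb{R}$ that has neither a $g$-minimum point nor a $g$-maximum point, such that $\mathcal{B}_f(\mathbb{R})=\mathcal{B}_g(\mathbb{R})$.
   Context: A two-point selection on $\mathbb{R}$ is a function $f$ from the set of two-element subsets of $\mathbb{R}$ to $\mathbb{R}$ with $f(F)\in F$. A point $x$ is an $f$-minimum if $f(\{x,y\})=x$ for all $y\neq x$, and an $f$-maximum if $f(\{x,y\})=y$ for all $y\ne x$. Write $r<_f s$ if $f(\{r,s\})=r$, $(\leftarrow,r)_f=\{x: x<_f r\}$, $(r,\rightarrow)_f=\{x: r<_f x\}$. The topology $\tau_f$ on $\mathbb{R}$ is generated (as a subbase) by all these sets, and $\mathcal{B}_f(\mathbb{R})$ is the $\sigma$-algebra generated by $\tau_f$. *)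

theory Defs
  imports "HOL-Analysis.Analysis"
begin

definition two_point_selection :: "(real set \<Rightarrow> real) \<Rightarrow> bool" where
  "two_point_selection f \<longleftrightarrow> (\<forall>x y. x \<noteq> y \<longrightarrow> f {x, y} \<in> {x, y})"

definition sel_minimum :: "(real set \<Rightarrow> real) \<Rightarrow> real \<Rightarrow> bool" where
  "sel_minimum f x \<longleftrightarrow> (\<forall>y. y \<noteq> x \<longrightarrow> f {x, y} = x)"

definition sel_maximum :: "(real set \<Rightarrow> real) \<Rightarrow> real \<Rightarrow> bool" where
  "sel_maximum f x \<longleftrightarrow> (\<forall>y. y \<noteq> x \<longrightarrow> f {x, y} = y)"

definition sel_less :: "(real set \<Rightarrow> real) \<Rightarrow> real \<Rightarrow> real \<Rightarrow> bool" where
  "sel_less f r s \<longleftrightarrow> r \<noteq> s \<and> f {r, s} = r"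

definition sel_subbase :: "(real set \<Rightarrow> real) \<Rightarrow> real set set" where
  "sel_subbase f = {{x. sel_less f x r} | r. True} \<union> {{x. sel_less f r x} | r. True}"

definition sel_topology :: "(real set \<Rightarrow> real) \<Rightarrow> real topology" where
  "sel_topology f = topology_generated_by (sel_subbase f)"

definition sel_borel :: "(real set \<Rightarrow> real) \<Rightarrow> real set set" where
  "sel_borel f = sigma_sets UNIV {U. openin (sel_topology f) U}"

end

theory Submission
  imports Defs
begin

(*
  The topology \<tau>_f is T1: the complement of a point r is the union of the two open rays at r.
  So finite sets are closed and Borel, and if g agrees with f on every pair meeting the
  complement of a finite set F, then every \<tau>_g-open set minus F is \<tau>_f-open; hence the two
  Borel \<sigma>-algebras coincide. A selection has at most one minimum and one maximum, and both
  can be destroyed by changing f only on pairs inside a finite set F that contains them and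
  has at least three points: there, select the smaller point, except on the pair formed by
  the least and the greatest point of F, where the greater one is selected.
*)

lemma sel_less_cases:
  assumes "two_point_selection f" "x \<noteq> r"
  shows "sel_less f x r \<or> sel_less f r x"
  using assms unfolding two_point_selection_def sel_less_def
  by (metis insert_commute insert_iff singletonD)

lemma topspace_sel_topology:
  assumes "two_point_selection f"
  shows "topspace (sel_topology f) = UNIV"
proof -
  have "x \<in> \<Union>(sel_subbase f)" for x
    using sel_less_cases[OF assms, of x "x + 1"] unfolding sel_subbase_def by auto
  then show ?thesis
    unfolding sel_topology_def by auto
qed

lemma openin_sel_topology_subbase:
  "S \<in> sel_subbase f \<Longrightarrow> openin (sel_topology f) S"
  unfolding sel_topology_def by (rule topology_generated_by_Basis)

lemma closedin_sel_topology_singleton: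
  assumes "two_point_selection f"
  shows "closedin (sel_topology f) {r}"
proof -
  have "topspace (sel_topology f) - {r} = {x. sel_less f x r} \<union> {x. sel_less f r x}"
    using sel_less_cases[OF assms] unfolding topspace_sel_topology[OF assms] sel_less_def
    by auto
  also have "openin (sel_topology f) \<dots>"
    by (intro openin_Un openin_sel_topology_subbase) (auto simp: sel_subbase_def)
  finally show ?thesis
    by (simp add: closedin_def topspace_sel_topology[OF assms])
qed

lemma closedin_sel_topology_finite:
  assumes "two_point_selection f" "finite F"
  shows "closedin (sel_topology f) F"
proof -
  have "closedin (sel_topology f) (\<Union>x\<in>F. {x})"
    using assms by (intro closedin_Union) (auto intro: closedin_sel_topology_singleton)
  then show ?thesis by simp
qed

lemma sel_borel_openin:
  "openin (sel_topology f) U \<Longrightarrow> U \<in> sel_borel f"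
  unfolding sel_borel_def by (rule sigma_sets.Basic) simp

lemma sel_borel_finite:
  assumes "two_point_selection f" "finite F"
  shows "F \<in> sel_borel f"
proof -
  have "openin (sel_topology f) (UNIV - F)"
    using closedin_sel_topology_finite[OF assms]
    unfolding closedin_def topspace_sel_topology[OF assms(1)] by blast
  then have "UNIV - (UNIV - F) \<in> sel_borel f"
    unfolding sel_borel_def by (intro sigma_sets.Compl sigma_sets.Basic) simp
  also have "UNIV - (UNIV - F) = F" by blast
  finally show ?thesis .
qed

lemma sel_subbase_Diff_eq_if_agree:
  assumes agree: "\<And>x y. x \<notin> F \<Longrightarrow> g {x, y} = f {x, y}"
    and "S \<in> sel_subbase g"
  obtains S' where "S' \<in> sel_subbase f" "S - F = S' - F"
proof -
  have less: "sel_less g x r \<longleftrightarrow> sel_less f x r" "sel_less g r x \<longleftrightarrow> sel_less f r x"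
    if "x \<notin> F" for x r
    using agree[OF that, of r] unfolding sel_less_def by (auto simp: insert_commute)
  from \<open>S \<in> sel_subbase g\<close> obtain r where "S = {x. sel_less g x r} \<or> S = {x. sel_less g r x}"
    unfolding sel_subbase_def by auto
  then show thesis
  proof
    assume "S = {x. sel_less g x r}"
    then have "S - F = {x. sel_less f x r} - F" using less by auto
    then show thesis by (rule that[rotated]) (auto simp: sel_subbase_def)
  next
    assume "S = {x. sel_less g r x}"
    then have "S - F = {x. sel_less f r x} - F" using less by auto
    then show thesis by (rule that[rotated]) (auto simp: sel_subbase_def)
  qed
qed

lemma openin_sel_topology_Diff_if_agree:
  assumes f: "two_point_selection f" and "finite F"
    and agree: "\<And>x y. x \<notin> F \<Longrightarrow> g {x, y} = f {x, y}"
    and U: "openin (sel_topology g) U"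
  shows "openin (sel_topology f) (U - F)"
proof -
  have "generate_topology_on (sel_subbase g) U"
    using U unfolding sel_topology_def openin_topology_generated_by_iff .
  then show ?thesis
  proof (induction rule: generate_topology_on.induct)
    case Empty
    then show ?case by simp
  next
    case (Int a b)
    have "a \<inter> b - F = (a - F) \<inter> (b - F)" by blast
    also have "openin (sel_topology f) \<dots>" using Int.IH by (rule openin_Int)
    finally show ?case .
  next
    case (UN K)
    have "\<Union>K - F = (\<Union>k\<in>K. k - F)" by blast
    also have "openin (sel_topology f) \<dots>" using UN.IH by (blast intro: openin_Union)
    finally show ?case .
  next
    case (Basis S)
    obtain S' where S': "S' \<in> sel_subbase f" "S - F = S' - F"
      using sel_subbase_Diff_eq_if_agree[OF agree Basis] .
    have "openin (sel_topology f) (S' - F)"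
      using openin_sel_topology_subbase[OF S'(1)] closedin_sel_topology_finite[OF f \<open>finite F\<close>]
      by (rule openin_diff)
    then show ?case using S'(2) by simp
  qed
qed

lemma sel_borel_subset_if_agree:
  assumes f: "two_point_selection f" and F: "finite F"
    and agree: "\<And>x y. x \<notin> F \<Longrightarrow> g {x, y} = f {x, y}"
  shows "sel_borel g \<subseteq> sel_borel f"
proof -
  have "U \<in> sel_borel f" if "openin (sel_topology g) U" for U
  proof -
    have "U - F \<in> sel_borel f"
      using openin_sel_topology_Diff_if_agree[OF f F agree that] by (rule sel_borel_openin)
    moreover have "U \<inter> F \<in> sel_borel f"
      using F by (simp add: sel_borel_finite[OF f])
    ultimately have "(U - F) \<union> (U \<inter> F) \<in> sel_borel f"
      unfolding sel_borel_def by (rule sigma_sets_Un)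
    then show ?thesis by (simp add: Un_Diff_Int)
  qed
  then have "Collect (openin (sel_topology g)) \<subseteq> sel_borel f" by blast
  then show ?thesis
    unfolding sel_borel_def[of g] sel_borel_def[of f] by (rule sigma_sets_mono)
qed

lemma sel_borel_eq_if_agree:
  assumes "two_point_selection f" "two_point_selection g" "finite F"
    and "\<And>x y. x \<notin> F \<Longrightarrow> g {x, y} = f {x, y}"
  shows "sel_borel f = sel_borel g"
proof (rule subset_antisym)
  show "sel_borel f \<subseteq> sel_borel g"
    using assms(2,3) by (rule sel_borel_subset_if_agree) (simp add: assms(4))
  show "sel_borel g \<subseteq> sel_borel f"
    using assms(1,3,4) by (rule sel_borel_subset_if_agree)
qed

lemma Uniq_sel_minimum: "\<exists>\<^sub>\<le>\<^sub>1x. sel_minimum f x"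
  unfolding Uniq_def sel_minimum_def by (metis insert_commute)

lemma Uniq_sel_maximum: "\<exists>\<^sub>\<le>\<^sub>1x. sel_maximum f x"
  unfolding Uniq_def sel_maximum_def by (metis insert_commute)

lemma finite_sel_extrema: "finite {x. sel_minimum f x \<or> sel_maximum f x}"
proof -
  obtain a b where "{x. sel_minimum f x} \<subseteq> {a}" "{x. sel_maximum f x} \<subseteq> {b}"
    using Uniq_sel_minimum[of f] Uniq_sel_maximum[of f] unfolding Uniq_def by blast
  then have "{x. sel_minimum f x \<or> sel_maximum f x} \<subseteq> {a, b}" by blast
  then show ?thesis by (rule finite_subset) simp
qed

definition sel_cycle_on :: "real set \<Rightarrow> (real set \<Rightarrow> real) \<Rightarrow> real set \<Rightarrow> real" where
  "sel_cycle_on F f S =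
     (if S \<subseteq> F then (if S = {Min F, Max F} then Max F else Min S) else f S)"

lemma sel_cycle_on_outside:
  "x \<notin> F \<Longrightarrow> sel_cycle_on F f {x, y} = f {x, y}"
  unfolding sel_cycle_on_def by simp

lemma sel_cycle_on_inside:
  "x \<in> F \<Longrightarrow> y \<in> F \<Longrightarrow>
     sel_cycle_on F f {x, y} = (if {x, y} = {Min F, Max F} then Max F else min x y)"
  unfolding sel_cycle_on_def by simp

lemma two_point_selection_sel_cycle_on:
  assumes "two_point_selection f" "finite F"
  shows "two_point_selection (sel_cycle_on F f)"
  unfolding two_point_selection_def
proof (intro allI impI)
  fix x y :: real assume "x \<noteq> y"
  show "sel_cycle_on F f {x, y} \<in> {x, y}"
  proof (cases "x \<in> F \<and> y \<in> F")
    case True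
    then show ?thesis
      by (auto simp: sel_cycle_on_inside min_def doubleton_eq_iff)
  next
    case False
    then show ?thesis
      using assms(1) \<open>x \<noteq> y\<close> sel_cycle_on_outside[of _ F f] unfolding two_point_selection_def
      by (metis insert_commute)
  qed
qed

lemma ex_between_Min_Max:
  fixes F :: "'a::linorder set"
  assumes "finite F" "3 \<le> card F"
  obtains z where "z \<in> F" "Min F < z" "z < Max F"
proof -
  have "\<not> F \<subseteq> {Min F, Max F}"
  proof
    assume "F \<subseteq> {Min F, Max F}"
    then have "card F \<le> card {Min F, Max F}" by (rule card_mono[rotated]) simp
    also have "\<dots> \<le> 2" by (cases "Min F = Max F") simp_all
    finally show False using assms(2) by simp
  qed
  then obtain z where z: "z \<in> F" "z \<noteq> Min F" "z \<noteq> Max F" by auto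
  moreover have "Min F \<le> z" "z \<le> Max F" using z(1) assms(1) by simp_all
  ultimately have "Min F < z" "z < Max F" by (auto simp: less_le)
  with z(1) show thesis by (rule that)
qed

lemma sel_cycle_on_no_extremum_inside:
  assumes "finite F" "3 \<le> card F" "x \<in> F"
  shows "\<not> sel_minimum (sel_cycle_on F f) x" "\<not> sel_maximum (sel_cycle_on F f) x"
proof -
  define lo hi where "lo = Min F" and "hi = Max F"
  obtain z where z: "z \<in> F" "lo < z" "z < hi"
    using ex_between_Min_Max[OF assms(1,2)] unfolding lo_def hi_def .
  have "F \<noteq> {}" using z(1) by auto
  then have lohi: "lo \<in> F" "hi \<in> F" using assms(1) unfolding lo_def hi_def by simp_all
  have bounds: "lo \<le> x" "x \<le> hi" using assms(1,3) unfolding lo_def hi_def by simp_all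
  have "hi \<noteq> lo" using z by simp
  have g: "sel_cycle_on F f {u, v} = (if {u, v} = {lo, hi} then hi else min u v)"
    if "u \<in> F" "v \<in> F" for u v
    using sel_cycle_on_inside[OF that] unfolding lo_def hi_def .
  consider "x = lo" | "x = hi" | "lo < x" "x < hi"
    using bounds by fastforce
  then have "(\<exists>y. y \<noteq> x \<and> sel_cycle_on F f {x, y} = y) \<and>
             (\<exists>y. y \<noteq> x \<and> sel_cycle_on F f {x, y} = x)"
  proof cases
    case 1
    have "hi \<noteq> x \<and> sel_cycle_on F f {x, hi} = hi" using g[OF lohi] 1 \<open>hi \<noteq> lo\<close> by simp
    moreover have "z \<noteq> x \<and> sel_cycle_on F f {x, z} = x"
      using g[OF lohi(1) z(1)] 1 z by (auto simp: doubleton_eq_iff)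
    ultimately show ?thesis by blast
  next
    case 2
    have "z \<noteq> x \<and> sel_cycle_on F f {x, z} = z"
      using g[OF lohi(2) z(1)] 2 z by (auto simp: doubleton_eq_iff)
    moreover have "lo \<noteq> x \<and> sel_cycle_on F f {x, lo} = x"
      using g[OF lohi(2) lohi(1)] 2 \<open>hi \<noteq> lo\<close> by (simp add: insert_commute)
    ultimately show ?thesis by blast
  next
    case 3
    have "lo \<noteq> x \<and> sel_cycle_on F f {x, lo} = lo"
      using g[OF assms(3) lohi(1)] 3 by (auto simp: doubleton_eq_iff)
    moreover have "hi \<noteq> x \<and> sel_cycle_on F f {x, hi} = x"
      using g[OF assms(3) lohi(2)] 3 by (auto simp: doubleton_eq_iff)
    ultimately show ?thesis by blast
  qed
  then show "\<not> sel_minimum (sel_cycle_on F f) x" "\<not> sel_maximum (sel_cycle_on F f) x"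
    unfolding sel_minimum_def sel_maximum_def by auto
qed

lemma sel_cycle_on_extremum_outside:
  assumes "x \<notin> F"
  shows "sel_minimum (sel_cycle_on F f) x \<longleftrightarrow> sel_minimum f x"
    and "sel_maximum (sel_cycle_on F f) x \<longleftrightarrow> sel_maximum f x"
  using assms unfolding sel_minimum_def sel_maximum_def by (simp_all add: sel_cycle_on_outside)

lemma sel_cycle_on_no_extremum:
  assumes "finite F" "3 \<le> card F"
    and "\<And>x. sel_minimum f x \<or> sel_maximum f x \<Longrightarrow> x \<in> F"
  shows "\<not> sel_minimum (sel_cycle_on F f) x" "\<not> sel_maximum (sel_cycle_on F f) x"
  using assms sel_cycle_on_no_extremum_inside[OF assms(1,2)] sel_cycle_on_extremum_outside
  by blast+

theorem lemma2p2:
  assumes "two_point_selection f"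
  shows "\<exists>g. two_point_selection g \<and> (\<nexists>x. sel_minimum g x) \<and> (\<nexists>x. sel_maximum g x)
             \<and> sel_borel f = sel_borel g"
proof -
  define F where "F = {x. sel_minimum f x \<or> sel_maximum f x} \<union> {0, 1, 2}"
  define g where "g = sel_cycle_on F f"
  have F: "finite F" unfolding F_def using finite_sel_extrema by simp
  have "3 \<le> card F"
    using card_mono[OF F, of "{0, 1, 2}"] unfolding F_def by auto
  moreover have "sel_minimum f x \<or> sel_maximum f x \<Longrightarrow> x \<in> F" for x
    unfolding F_def by simp
  ultimately have "\<not> sel_minimum g x" "\<not> sel_maximum g x" for x
    using sel_cycle_on_no_extremum[OF F] unfolding g_def by blast+
  moreover have "two_point_selection g"
    unfolding g_def using assms F by (rule two_point_selection_sel_cycle_on)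
  moreover have "sel_borel f = sel_borel g"
    unfolding g_def
    using assms two_point_selection_sel_cycle_on[OF assms F] F sel_cycle_on_outside
    by (rule sel_borel_eq_if_agree)
  ultimately show ?thesis by blast
qed

end
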